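(* Assume $k$ is separably closed (so $f$ splits over $k$, with roots $\omega_1,\dots,\omega_{2g+1}$). Then there exist subsets $I_1,\dots,I_{2^g}\subseteq\{1,\dots,2g+1\}$, each of cardinality $g$, such that the vectors $M_{I_1}\cdot1,\dots,M_{I_{2^g}}\cdot1$ form a basis of $S$. (Equivalently, there are $2^g$ points of $J[2](k)$ of Mumford degree $g$, namely the classes of $\sum_{i\in I_j}(\omega_i,0)-gP_\infty$, whose associated vectors $M_{I_j}\cdot 1$ are linearly independent.)
   Context: Let $k$ be a field of characteristic $\neq2$, $g\ge1$, $f(x)=x^{2g+1}+c_1x^{2g}+\dots+c_{2g+1}\in k[x]$ of nonzero discriminant, $C$ the curve $y^2=f(x)$ with point at infinity $P_\infty$, $J$ its Jacobian. Quadratic space $V_f=k[x]/(f)$, $\psi(a,b)=\tau(ab)$ with $\tau(\sum_{i\le 2g}a_ix^i)=a_{2g}$; basis $p_i=x^i$ ($0\le i\le g$), $p_{g+i}=x^{g+i}+c_1x^{g+i-1}+\dots+c_{2i-1}x^{g-i+1}+\tfrac12c_{2i}x^{g-i}$ ($1\le i\le g$), with $\psi(p_i,p_j)=\delta_{i+j,2g}$. $F=\langle p_0,..,p_{g-1}\rangle$, $E=\langle p_{g+1},..,p_{2g}\rangle$; Clifford algebra $C(V_f)$ = tensor algebra modulo $v\otimes v-\psi(v,v)$; spin representation $S=\bigwedge^*E$ with: $e\in E$ acting by $e\wedge-$, $f'\in F$ by $w_1\wedge\cdots\wedge w_r\mapsto\sum_i(-1)^{i-1}2\psi(f',w_i)w_1\wedge\cdots\widehat{w_i}\cdots\wedge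 w_r$, $p_g$ by $(-1)^r$ on $\bigwedge^rE$; $1\in\bigwedge^0E\subset S$. Operators $M_I$: $\epsilon_i=\prod_{j\ne i}(x-\omega_j)\in V_f$; for $I=\{i_1<\dots<i_r\}\subseteq\{1,\dots,2g+1\}$, $\delta_I=\prod_{1\le j<l\le r}(\omega_{i_l}-\omega_{i_j})$, and $M_I\in\mathrm{End}(S)$ is the action of $\delta_I^{-1}\epsilon_{i_1}\cdots\epsilon_{i_r}\in C(V_f)$ (Clifford product). *)

theory Defs
  imports "HOL-Computational_Algebra.Polynomial"
begin

definition separably_closed :: "'a::field itself \<Rightarrow> bool" where
  "separably_closed _ \<longleftrightarrow>
     (\<forall>p::'a poly. degree p \<ge> 1 \<longrightarrow> coprime p (pderiv p) \<longrightarrow> (\<exists>x. poly p x = 0))"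

text \<open>Elements of V_f are represented by polynomials (taken modulo f).
 g is the genus, deg f = 2g+1.\<close>

definition ccoef :: "nat \<Rightarrow> 'a::field poly \<Rightarrow> nat \<Rightarrow> 'a" where
  "ccoef g f j = coeff f (2*g+1-j)"

definition tauV :: "nat \<Rightarrow> 'a::field poly \<Rightarrow> 'a poly \<Rightarrow> 'a" where
  "tauV g f a = coeff (a mod f) (2*g)"

definition psiV :: "nat \<Rightarrow> 'a::field poly \<Rightarrow> 'a poly \<Rightarrow> 'a poly \<Rightarrow> 'a" where
  "psiV g f a b = tauV g f (a * b)"

definition pbas :: "nat \<Rightarrow> 'a::field poly \<Rightarrow> nat \<Rightarrow> 'a poly" where
  "pbas g f n = (if n \<le> g then monom 1 n
     else (let i = n - g in
        monom 1 (g+i)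
        + (\<Sum>j\<in>{1..2*i-1}. monom (ccoef g f j) (g+i-j))
        + monom (ccoef g f (2*i) / 2) (g-i)))"

text \<open>Coordinates with respect to the basis p (using psi(p_i,p_j) = delta_{i+j,2g}):
 coordinate of v on p_n is psi(v, p_{2g-n}).\<close>
definition pcoord :: "nat \<Rightarrow> 'a::field poly \<Rightarrow> 'a poly \<Rightarrow> nat \<Rightarrow> 'a" where
  "pcoord g f v n = psiV g f v (pbas g f (2*g - n))"

text \<open>E has basis p_{g+1},...,p_{2g}; the index i \<in> {1..g} stands for p_{g+i}.
 An element of S is a function from subsets J \<subseteq> {1..g} to k, the coefficient
 of the basis vector p_{g+j_1} \<and> ... \<and> p_{g+j_r} (j_1 < ... < j_r, J = {j_1..j_r});
 it is required to vanish outside Pow {1..g}.\<close>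

definition spin_space :: "nat \<Rightarrow> (nat set \<Rightarrow> 'a::field) set" where
  "spin_space g = {s. \<forall>K. K \<notin> Pow {1..g} \<longrightarrow> s K = 0}"

definition sbasis :: "nat set \<Rightarrow> nat set \<Rightarrow> 'a::field" where
  "sbasis J = (\<lambda>K. if K = J then 1 else 0)"

definition wsign :: "nat set \<Rightarrow> nat \<Rightarrow> 'a::field" where
  "wsign J i = (-1) ^ card {j\<in>J. j < i}"

definition wedge_e :: "nat \<Rightarrow> nat set \<Rightarrow> nat set \<Rightarrow> 'a::field" where
  "wedge_e i J = (if i \<in> J then (\<lambda>K. 0) else (\<lambda>K. wsign J i * sbasis (insert i J) K))"

text \<open>Action of p_{g-i} (which pairs to 1 with p_{g+i}) on basis vectors:
 w_1\<and>...\<and>w_r \<mapsto> \<Sum>_l (-1)^(l-1) 2 psi(p_{g-i}, w_l) w_1\<and>..(omit w_l)..\<and>w_r.\<close>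
definition contr_f :: "nat \<Rightarrow> nat set \<Rightarrow> nat set \<Rightarrow> 'a::field" where
  "contr_f i J = (if i \<in> J then (\<lambda>K. 2 * wsign J i * sbasis (J - {i}) K) else (\<lambda>K. 0))"

text \<open>Action of p_g: (-1)^r on \<And>^r E.\<close>
definition act_pg :: "nat set \<Rightarrow> nat set \<Rightarrow> 'a::field" where
  "act_pg J = (\<lambda>K. (-1) ^ card J * sbasis J K)"

definition vact_basis :: "nat \<Rightarrow> 'a::field poly \<Rightarrow> 'a poly \<Rightarrow> nat set \<Rightarrow> nat set \<Rightarrow> 'a" where
  "vact_basis g f v J = (\<lambda>K.
      (\<Sum>i\<in>{1..g}. pcoord g f v (g+i) * wedge_e i J K)
    + (\<Sum>i\<in>{1..g}. pcoord g f v (g-i) * contr_f i J K)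
    + pcoord g f v g * act_pg J K)"

definition vact :: "nat \<Rightarrow> 'a::field poly \<Rightarrow> 'a poly \<Rightarrow> (nat set \<Rightarrow> 'a) \<Rightarrow> (nat set \<Rightarrow> 'a)" where
  "vact g f v s = (\<lambda>K. \<Sum>J\<in>Pow {1..g}. s J * vact_basis g f v J K)"

text \<open>Action of a Clifford product v_1 v_2 ... v_r: v_1 acting last.\<close>
fun vact_list :: "nat \<Rightarrow> 'a::field poly \<Rightarrow> 'a poly list \<Rightarrow> (nat set \<Rightarrow> 'a) \<Rightarrow> (nat set \<Rightarrow> 'a)" where
  "vact_list g f [] s = s"
| "vact_list g f (v # vs) s = vact g f v (vact_list g f vs s)"

definition one_S :: "nat set \<Rightarrow> 'a::field" where
  "one_S = sbasis {}"

definition eps :: "nat \<Rightarrow> (nat \<Rightarrow> 'a::field) \<Rightarrow> nat \<Rightarrow> 'a poly" where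
  "eps g \<omega> i = (\<Prod>j\<in>{1..2*g+1} - {i}. [:- \<omega> j, 1:])"

definition deltaI :: "(nat \<Rightarrow> 'a::field) \<Rightarrow> nat set \<Rightarrow> 'a" where
  "deltaI \<omega> I = (\<Prod>(a, b)\<in>{(a, b). a \<in> I \<and> b \<in> I \<and> a < b}. \<omega> b - \<omega> a)"

definition MI :: "nat \<Rightarrow> 'a::field poly \<Rightarrow> (nat \<Rightarrow> 'a) \<Rightarrow> nat set \<Rightarrow> (nat set \<Rightarrow> 'a) \<Rightarrow> (nat set \<Rightarrow> 'a)" where
  "MI g f \<omega> I s = (\<lambda>K. inverse (deltaI \<omega> I) *
      vact_list g f (map (eps g \<omega>) (sorted_list_of_set I)) s K)"

end

theory Submission
  imports Defs "HOL-Library.Function_Algebras"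
begin

text \<open>The operators \<open>\<epsilon>\<^sub>a\<close> on \<open>S\<close> pairwise anticommute, because \<open>\<psi>(\<epsilon>\<^sub>a, \<epsilon>\<^sub>b)\<close> is the divided
  difference \<open>(f(\<omega>\<^sub>a) - f(\<omega>\<^sub>b)) / (\<omega>\<^sub>a - \<omega>\<^sub>b) = 0\<close>. Hence multiplying \<open>\<epsilon>\<^sub>I \<cdot> 1\<close> by one more
  \<open>\<epsilon>\<^sub>a\<close>, on either side, gives a multiple of \<open>\<epsilon>\<^sub>I\<^sub>\<triangle>\<^sub>{\<^sub>a\<^sub>} \<cdot> 1\<close>. For \<open>deg h \<le> g\<close>, Lagrange
  interpolation yields the relation \<open>\<Sum>\<^sub>a h(\<omega>\<^sub>a)/\<epsilon>\<^sub>a(\<omega>\<^sub>a) \<epsilon>\<^sub>a \<cdot> 1 = h\<^sub>g \<cdot> 1\<close>; choosing \<open>h\<close> to vanish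
  at suitable roots expresses every \<open>\<epsilon>\<^sub>I \<cdot> 1\<close> through those with \<open>|I| = g\<close>. As the \<open>\<epsilon>\<^sub>a\<close> span
  \<open>V\<^sub>f\<close>, the span of all \<open>\<epsilon>\<^sub>I \<cdot> 1\<close> is stable under wedging with \<open>E\<close>, so it is all of \<open>S\<close>. Thus
  the \<open>M\<^sub>I \<cdot> 1\<close> with \<open>|I| = g\<close> span the \<open>2\<^sup>g\<close>-dimensional space \<open>S\<close>, and a basis can be
  extracted from them.\<close>

lemma sum_fun_apply: "(\<Sum>x\<in>A. F x) K = (\<Sum>x\<in>A. F x K)"
  by (induct A rule: infinite_finite_induct) auto

lemma sum_atMost_centered:
  fixes g :: nat
  shows "(\<Sum>n\<le>2*g. F n) = (\<Sum>i=1..g. F (g + i)) + (\<Sum>i=1..g. F (g - i)) + (F g :: 'a::comm_monoid_add)"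
proof -
  have "n \<in> (\<lambda>i. g + i) ` {1..g} \<union> ((\<lambda>i. g - i) ` {1..g} \<union> {g})" if "n \<le> 2*g" for n
  proof (cases "g < n")
    case True
    then show ?thesis using that by (auto intro!: image_eqI[of n _ "n - g"])
  next
    case False
    then show ?thesis by (auto intro!: image_eqI[of n _ "g - n"])
  qed
  then have split: "{..2*g} = (\<lambda>i. g + i) ` {1..g} \<union> ((\<lambda>i. g - i) ` {1..g} \<union> {g})"
    by (intro subset_antisym subsetI) (simp_all, auto)
  have "sum F ((\<lambda>i. g + i) ` {1..g}) = (\<Sum>i=1..g. F (g + i))"
    "sum F ((\<lambda>i. g - i) ` {1..g}) = (\<Sum>i=1..g. F (g - i))"
    by (subst sum.reindex; auto simp: inj_on_def)+
  moreover have "(\<lambda>i. g + i) ` {1..g} \<inter> ((\<lambda>i. g - i) ` {1..g} \<union> {g}) = {}"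
    "(\<lambda>i. g - i) ` {1..g} \<inter> {g} = {}"
    by auto
  ultimately show ?thesis
    unfolding split by (simp only: sum.union_disjoint finite_UnI finite_imageI finite_atLeastAtMost
        finite.emptyI finite_insert sum.insert_if sum.empty add.assoc empty_iff add_0_right if_False)
qed

subsection \<open>The spin representation\<close>

lemma wsign_insert:
  "j \<notin> K \<Longrightarrow> wsign (insert j K) i = (if j < i then - wsign K i else (wsign K i :: 'a::field))"
proof (cases "j < i")
  case True
  moreover assume "j \<notin> K"
  moreover have "{x\<in>insert j K. x < i} = insert j {x\<in>K. x < i}"
    using True by auto
  ultimately show ?thesis by (simp add: wsign_def)
next
  case False
  then have "{x\<in>insert j K. x < i} = {x\<in>K. x < i}" by auto
  then show ?thesis using False by (simp add: wsign_def)
qed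

lemma wsign_remove:
  "j \<in> K \<Longrightarrow> wsign (K - {j}) i = (if j < i then - wsign K i else (wsign K i :: 'a::field))"
proof -
  assume "j \<in> K"
  then have "wsign K i = (if j < i then - wsign (K - {j}) i else (wsign (K - {j}) i :: 'a))"
    by (metis Diff_iff insertI1 insert_Diff wsign_insert)
  then show ?thesis by auto
qed

lemma wsign_insert_self: "wsign (insert i K) i = wsign K i"
  unfolding wsign_def by (rule arg_cong[where f = "\<lambda>A. (-1) ^ card A"]) auto

lemma wsign_remove_self: "wsign (K - {i}) i = wsign K i"
  unfolding wsign_def by (rule arg_cong[where f = "\<lambda>A. (-1) ^ card A"]) auto

lemma wsign_mult_self: "wsign K i * wsign K i = (1::'a::field)"
  by (simp add: wsign_def flip: power_add)

text \<open>The actions of \<open>p\<^sub>g\<^sub>+\<^sub>i\<close>, \<open>p\<^sub>g\<^sub>-\<^sub>i\<close> and \<open>p\<^sub>g\<close> on \<open>S\<close>, written for arbitrary coefficient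
  functions.\<close>

definition wedge_op :: "nat \<Rightarrow> (nat set \<Rightarrow> 'a::field) \<Rightarrow> nat set \<Rightarrow> 'a" where
  "wedge_op i s K = (if i \<in> K then wsign (K - {i}) i * s (K - {i}) else 0)"

definition contract_op :: "nat \<Rightarrow> (nat set \<Rightarrow> 'a::field) \<Rightarrow> nat set \<Rightarrow> 'a" where
  "contract_op i s K = (if i \<in> K then 0 else 2 * wsign K i * s (insert i K))"

definition parity_op :: "(nat set \<Rightarrow> 'a::field) \<Rightarrow> nat set \<Rightarrow> 'a" where
  "parity_op s K = (-1) ^ card K * s K"

lemma wedge_op_anticomm: "wedge_op i (wedge_op j s) K + wedge_op j (wedge_op i s) K = 0"
proof (cases "i \<noteq> j \<and> i \<in> K \<and> j \<in> K")
  case True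
  have "K - {i} - {j} = K - {j} - {i}" by auto
  then show ?thesis
    using True by (auto simp: wedge_op_def wsign_remove wsign_remove_self)
qed (auto simp: wedge_op_def)

lemma contract_op_anticomm: "contract_op i (contract_op j s) K + contract_op j (contract_op i s) K = 0"
proof (cases "i \<noteq> j \<and> i \<notin> K \<and> j \<notin> K")
  case True
  have "insert i (insert j K) = insert j (insert i K)" by auto
  then show ?thesis
    using True by (auto simp: contract_op_def wsign_insert wsign_insert_self)
qed (auto simp: contract_op_def)

lemma wedge_contract_anticomm:
  "wedge_op i (contract_op j s) K + contract_op j (wedge_op i s) K = (if i = j then 2 * s K else 0)"
proof (cases "i = j")
  case True
  show ?thesis
  proof (cases "i \<in> K")
    case True
    then have "insert i (K - {i}) = K" by auto
    then show ?thesis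
      using True \<open>i = j\<close> by (simp add: wedge_op_def contract_op_def wsign_remove_self wsign_mult_self
          flip: mult.assoc)
  next
    case False
    then have "insert i K - {i} = K" by auto
    then show ?thesis
      using False \<open>i = j\<close> by (simp add: wedge_op_def contract_op_def wsign_insert_self wsign_mult_self
          flip: mult.assoc)
  qed
next
  case False
  show ?thesis
  proof (cases "i \<in> K \<and> j \<notin> K")
    case True
    have "insert j (K - {i}) = insert j K - {i}" using False by auto
    then show ?thesis using True False
      by (auto simp: wedge_op_def contract_op_def wsign_insert wsign_remove wsign_remove_self
          wsign_insert_self)
  qed (use False in \<open>auto simp: wedge_op_def contract_op_def\<close>)
qed

lemma parity_wedge_anticomm:
  assumes "\<And>K. infinite K \<Longrightarrow> s K = 0"
  shows "parity_op (wedge_op i s) K + wedge_op i (parity_op s) K = 0"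
proof (cases "i \<in> K \<and> finite K")
  case True
  then obtain n where "card K = Suc n" "card (K - {i}) = n"
    by (metis card_Suc_Diff1)
  then show ?thesis using True by (simp add: wedge_op_def parity_op_def)
qed (use assms[of "K - {i}"] in \<open>auto simp: wedge_op_def parity_op_def\<close>)

lemma parity_contract_anticomm:
  assumes "\<And>K. infinite K \<Longrightarrow> s K = 0"
  shows "parity_op (contract_op i s) K + contract_op i (parity_op s) K = 0"
proof (cases "i \<notin> K \<and> finite K")
  case True
  then show ?thesis by (simp add: contract_op_def parity_op_def)
qed (use assms[of "insert i K"] in \<open>auto simp: contract_op_def parity_op_def\<close>)

lemma parity_op_involutive: "parity_op (parity_op s) K = s K"
  by (simp add: parity_op_def flip: mult.assoc power_add)

text \<open>\<open>spin_gen g n\<close> is the action of the basis vector \<open>p\<^sub>n\<close> of \<open>V\<^sub>f\<close>.\<close>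

definition spin_gen :: "nat \<Rightarrow> nat \<Rightarrow> (nat set \<Rightarrow> 'a::field) \<Rightarrow> nat set \<Rightarrow> 'a" where
  "spin_gen g n =
     (if g < n then wedge_op (n - g) else if n < g then contract_op (g - n) else parity_op)"

lemma spin_gen_lincomb:
  "spin_gen g n (\<lambda>K. \<Sum>x\<in>X. c x * t x K) K = (\<Sum>x\<in>X. c x * spin_gen g n (t x) K)"
  by (simp add: spin_gen_def wedge_op_def contract_op_def parity_op_def sum_distrib_left
      mult.left_commute)

lemma spin_gen_anticomm:
  assumes "\<And>K. infinite K \<Longrightarrow> s K = 0"
  shows "spin_gen g m (spin_gen g n s) K + spin_gen g n (spin_gen g m s) K =
    (if m + n = 2*g then 2 * s K else 0)"
proof -
  have contract_wedge: "contract_op j (wedge_op i s) K + wedge_op i (contract_op j s) K =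
      (if i = j then 2 * s K else 0)" for i j
    using wedge_contract_anticomm[of i j s K] by (simp add: add.commute)
  have wedge_parity: "wedge_op i (parity_op s) K + parity_op (wedge_op i s) K = 0" for i
    using parity_wedge_anticomm[OF assms, where i = i and K = K] by (simp add: add.commute)
  have contract_parity: "contract_op i (parity_op s) K + parity_op (contract_op i s) K = 0" for i
    using parity_contract_anticomm[OF assms, where i = i and K = K] by (simp add: add.commute)
  show ?thesis
    by (cases rule: linorder_cases[of g m]; cases rule: linorder_cases[of g n])
      (auto simp: spin_gen_def wedge_op_anticomm contract_op_anticomm wedge_contract_anticomm
        contract_wedge parity_wedge_anticomm[OF assms] parity_contract_anticomm[OF assms] wedge_parity
        contract_parity parity_op_involutive)
qed

definition spin_act :: "nat \<Rightarrow> (nat \<Rightarrow> 'a::field) \<Rightarrow> (nat set \<Rightarrow> 'a) \<Rightarrow> nat set \<Rightarrow> 'a" where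
  "spin_act g u s = (\<lambda>K. \<Sum>n\<le>2*g. u n * spin_gen g n s K)"

text \<open>The form \<open>\<psi>\<close> in coordinates with respect to the basis \<open>p\<close>, using \<open>\<psi>(p\<^sub>i, p\<^sub>j) = \<delta>\<^sub>i\<^sub>+\<^sub>j\<^sub>,\<^sub>2\<^sub>g\<close>.\<close>

definition pform :: "nat \<Rightarrow> (nat \<Rightarrow> 'a::comm_ring) \<Rightarrow> (nat \<Rightarrow> 'a) \<Rightarrow> 'a" where
  "pform g u v = (\<Sum>n\<le>2*g. u n * v (2*g - n))"

lemma spin_act_anticomm:
  assumes "\<And>K. infinite K \<Longrightarrow> s K = 0"
  shows "spin_act g u (spin_act g v s) K + spin_act g v (spin_act g u s) K = 2 * pform g u v * s K"
proof -
  have expand: "spin_act g u (spin_act g v s) K =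
      (\<Sum>m\<le>2*g. \<Sum>n\<le>2*g. u m * v n * spin_gen g m (spin_gen g n s) K)" for u v
    by (simp add: spin_act_def spin_gen_lincomb sum_distrib_left mult.assoc)
  have delta: "(\<Sum>n\<le>2*g. u m * v n * (if m + n = 2*g then 2 * s K else 0)) = u m * v (2*g - m) * (2 * s K)"
    if "m \<le> 2*g" for m
  proof -
    have "\<And>n. (m + n = 2*g) = (n = 2*g - m)" using that by auto
    then show ?thesis by (simp add: if_distrib[of "\<lambda>x. _ * x"] cong: if_cong)
  qed
  have "spin_act g u (spin_act g v s) K + spin_act g v (spin_act g u s) K =
      (\<Sum>m\<le>2*g. \<Sum>n\<le>2*g. u m * v n *
         (spin_gen g m (spin_gen g n s) K + spin_gen g n (spin_gen g m s) K))"
    unfolding expand by (subst (2) sum.swap) (simp add: sum.distrib[symmetric] algebra_simps)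
  also have "\<dots> = (\<Sum>m\<le>2*g. u m * v (2*g - m) * (2 * s K))"
    by (simp add: spin_gen_anticomm[OF assms] delta)
  also have "\<dots> = 2 * pform g u v * s K"
    by (simp add: pform_def sum_distrib_left sum_distrib_right mult_ac)
  finally show ?thesis .
qed

lemma spin_act_split:
  "spin_act g u s K = (\<Sum>i=1..g. u (g + i) * wedge_op i s K) + (\<Sum>i=1..g. u (g - i) * contract_op i s K)
     + u g * parity_op s K"
proof -
  have "(\<Sum>i=1..g. u (g + i) * spin_gen g (g + i) s K) = (\<Sum>i=1..g. u (g + i) * wedge_op i s K)"
    "(\<Sum>i=1..g. u (g - i) * spin_gen g (g - i) s K) = (\<Sum>i=1..g. u (g - i) * contract_op i s K)"
    by (auto intro!: sum.cong simp: spin_gen_def)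
  then show ?thesis
    unfolding spin_act_def sum_atMost_centered by (simp add: spin_gen_def[of g g])
qed

lemma sum_spin_act: "(\<Sum>x\<in>X. c x * spin_act g (u x) s K) = spin_act g (\<lambda>n. \<Sum>x\<in>X. c x * u x n) s K"
  by (simp add: spin_act_def sum_distrib_left sum_distrib_right mult.assoc sum.swap[of _ X])

lemma spin_spaceD: "s \<in> spin_space g \<Longrightarrow> K \<notin> Pow {1..g} \<Longrightarrow> s K = 0"
  by (simp add: spin_space_def)

lemma spin_space_infinite: "s \<in> spin_space g \<Longrightarrow> infinite K \<Longrightarrow> s K = 0"
  by (rule spin_spaceD) (auto dest: finite_subset)

lemma sum_wedge_e:
  assumes "s \<in> spin_space g"
  shows "(\<Sum>J\<in>Pow {1..g}. s J * wedge_e i J K) = wedge_op i s K"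
proof -
  have "(\<Sum>J\<in>Pow {1..g}. s J * wedge_e i J K) =
      (\<Sum>J\<in>Pow {1..g}. if J = K - {i} then (if i \<in> K then wsign J i * s J else 0) else 0)"
  proof (rule sum.cong[OF refl])
    fix J
    have "i \<notin> J \<Longrightarrow> (K = insert i J) = (i \<in> K \<and> J = K - {i})" by auto
    then show "s J * wedge_e i J K = (if J = K - {i} then (if i \<in> K then wsign J i * s J else 0) else 0)"
      by (auto simp: wedge_e_def sbasis_def)
  qed
  also have "\<dots> = wedge_op i s K"
    using spin_spaceD[OF assms, of "K - {i}"] by (auto simp: wedge_op_def)
  finally show ?thesis .
qed

lemma sum_contr_f:
  assumes "s \<in> spin_space g"
  shows "(\<Sum>J\<in>Pow {1..g}. s J * contr_f i J K) = contract_op i s K"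
proof -
  have "(\<Sum>J\<in>Pow {1..g}. s J * contr_f i J K) =
      (\<Sum>J\<in>Pow {1..g}. if J = insert i K then (if i \<notin> K then 2 * wsign K i * s J else 0) else 0)"
  proof (rule sum.cong[OF refl])
    fix J
    have "i \<in> J \<Longrightarrow> (K = J - {i}) = (i \<notin> K \<and> J = insert i K)" by auto
    then show "s J * contr_f i J K =
        (if J = insert i K then (if i \<notin> K then 2 * wsign K i * s J else 0) else 0)"
      by (auto simp: contr_f_def sbasis_def wsign_insert_self)
  qed
  also have "\<dots> = contract_op i s K"
    using spin_spaceD[OF assms, of "insert i K"] by (auto simp: contract_op_def)
  finally show ?thesis .
qed

lemma sum_act_pg:
  assumes "s \<in> spin_space g"
  shows "(\<Sum>J\<in>Pow {1..g}. s J * act_pg J K) = parity_op s K"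
  using spin_spaceD[OF assms, of K]
  by (simp add: act_pg_def sbasis_def parity_op_def if_distrib[of "\<lambda>x. _ * x"] cong: if_cong)

lemma vact_eq_spin_act:
  assumes "s \<in> spin_space g"
  shows "vact g f v s = spin_act g (pcoord g f v) s"
proof
  fix K
  have "vact g f v s K =
      (\<Sum>i=1..g. pcoord g f v (g + i) * (\<Sum>J\<in>Pow {1..g}. s J * wedge_e i J K))
    + (\<Sum>i=1..g. pcoord g f v (g - i) * (\<Sum>J\<in>Pow {1..g}. s J * contr_f i J K))
    + pcoord g f v g * (\<Sum>J\<in>Pow {1..g}. s J * act_pg J K)"
    unfolding vact_def vact_basis_def
    by (simp only: distrib_left sum_distrib_left sum.distrib mult.left_commute)
      (simp only: sum.swap[where A = "Pow {1..g}"])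
  then show "vact g f v s K = spin_act g (pcoord g f v) s K"
    unfolding spin_act_split sum_wedge_e[OF assms] sum_contr_f[OF assms] sum_act_pg[OF assms] .
qed

lemma vact_in_spin_space: "vact g f v s \<in> spin_space g"
  unfolding spin_space_def
proof (intro CollectI allI impI)
  fix K :: "nat set" assume K: "K \<notin> Pow {1..g}"
  have "vact_basis g f v J K = 0" if J: "J \<in> Pow {1..g}" for J
  proof -
    have "(\<Sum>i=1..g. pcoord g f v (g + i) * wedge_e i J K) = 0"
      "(\<Sum>i=1..g. pcoord g f v (g - i) * contr_f i J K) = 0"
      using J K by (auto intro!: sum.neutral simp: wedge_e_def contr_f_def sbasis_def)
    moreover have "pcoord g f v g * act_pg J K = 0"
      using J K by (auto simp: act_pg_def sbasis_def)
    ultimately show ?thesis by (simp add: vact_basis_def)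
  qed
  then show "vact g f v s K = 0" by (simp add: vact_def)
qed

lemma vact_lincomb: "vact g f v (\<lambda>K. \<Sum>x\<in>X. c x * t x K) = (\<lambda>K. \<Sum>x\<in>X. c x * vact g f v (t x) K)"
  by (simp add: vact_def sum_distrib_left sum_distrib_right mult.assoc sum.swap[of _ X])

lemma vact_list_lincomb:
  "vact_list g f vs (\<lambda>K. \<Sum>x\<in>X. c x * t x K) = (\<lambda>K. \<Sum>x\<in>X. c x * vact_list g f vs (t x) K)"
  by (induction vs) (simp_all add: vact_lincomb)

lemma one_S_in_spin_space: "one_S \<in> spin_space g"
  by (simp add: spin_space_def one_S_def sbasis_def)

lemma spin_act_one:
  fixes u :: "nat \<Rightarrow> 'a::field"
  shows "spin_act g u one_S K = u g * one_S K + (\<Sum>i=1..g. u (g + i) * sbasis {i} K)"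
proof -
  have "wedge_op i one_S K = (sbasis {i} K :: 'a)" for i
  proof -
    have "(i \<in> K \<and> K - {i} = {}) = (K = {i})" by auto
    then show ?thesis by (auto simp: wedge_op_def one_S_def sbasis_def wsign_def)
  qed
  moreover have "contract_op i one_S K = (0 :: 'a)" "parity_op one_S K = (one_S K :: 'a)" for i
    by (simp_all add: contract_op_def parity_op_def one_S_def sbasis_def)
  ultimately show ?thesis by (simp add: spin_act_split add.commute)
qed

lemma spin_space_expansion: "s \<in> spin_space g \<Longrightarrow> s = (\<lambda>K. \<Sum>J\<in>Pow {1..g}. s J * sbasis J K)"
  by (rule ext) (auto simp: sbasis_def if_distrib[of "\<lambda>x. _ * x"] spin_spaceD cong: if_cong)

text \<open>With \<open>c = ccoef g f\<close>, \<open>head_poly c (2*g+1)\<close> evaluates \<open>f\<close>, and \<open>head_poly c m\<close> evaluates the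
  polynomial part of \<open>f / x\<^sup>2\<^sup>g\<^sup>+\<^sup>1\<^sup>-\<^sup>m\<close>.\<close>

definition head_poly :: "(nat \<Rightarrow> 'a::comm_ring_1) \<Rightarrow> nat \<Rightarrow> 'a \<Rightarrow> 'a" where
  "head_poly c m x = (\<Sum>l\<le>m. c l * x ^ (m - l))"

lemma head_poly_Suc: "head_poly c (Suc m) x = x * head_poly c m x + c (Suc m)"
proof -
  have "(\<Sum>l\<le>m. c l * x ^ (Suc m - l)) = x * head_poly c m x"
    unfolding head_poly_def sum_distrib_left
    by (rule sum.cong[OF refl]) (simp add: Suc_diff_le algebra_simps)
  then show ?thesis by (simp add: head_poly_def)
qed

definition head_quotient :: "(nat \<Rightarrow> 'a::comm_ring_1) \<Rightarrow> nat \<Rightarrow> 'a \<Rightarrow> 'a \<Rightarrow> 'a" where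
  "head_quotient c n x y =
     (\<Sum>j\<le>n. (x * y) ^ (n - j) * (head_poly c (2*j) x + head_poly c (2*j) y - c (2*j)))"

lemma head_quotient_eq:
  "(x - y) * head_quotient c n x y = head_poly c (2*n+1) x - head_poly c (2*n+1) y"
proof (induction n)
  case 0
  then show ?case by (simp add: head_quotient_def head_poly_def algebra_simps)
next
  case (Suc n)
  let ?Q = "head_poly c (2*Suc n) x + head_poly c (2*Suc n) y - c (2*Suc n)"
  have "(\<Sum>j\<le>n. (x*y) ^ (Suc n - j) * (head_poly c (2*j) x + head_poly c (2*j) y - c (2*j))) =
      x * y * head_quotient c n x y"
    unfolding head_quotient_def sum_distrib_left
    by (rule sum.cong[OF refl]) (simp add: Suc_diff_le algebra_simps)
  then have step: "head_quotient c (Suc n) x y = x * y * head_quotient c n x y + ?Q"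
    by (simp add: head_quotient_def)
  have even: "head_poly c (2*Suc n) z = z * head_poly c (2*n+1) z + c (2*Suc n)" for z
    using head_poly_Suc[of c "2*n+1" z] by simp
  have odd: "head_poly c (2*Suc n+1) z = z * head_poly c (2*Suc n) z + c (2*Suc n+1)" for z
    using head_poly_Suc[of c "2*Suc n" z] by simp
  have "(x - y) * head_quotient c (Suc n) x y =
      x * y * ((x - y) * head_quotient c n x y) + (x - y) * ?Q"
    unfolding step by (simp add: algebra_simps)
  also have "\<dots> = head_poly c (2*Suc n+1) x - head_poly c (2*Suc n+1) y"
    unfolding Suc.IH odd even by (simp add: algebra_simps)
  finally show ?case .
qed

lemma lower_unitriangular_solvable:
  fixes A :: "nat \<Rightarrow> nat \<Rightarrow> 'a::comm_ring_1"
  assumes "\<And>m. m \<le> N \<Longrightarrow> A m m = 1"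
  shows "\<exists>l. \<forall>m\<le>N. (\<Sum>n\<le>m. A m n * l n) = t m"
  using assms
proof (induction N)
  case 0
  then show ?case by (intro exI[of _ "\<lambda>_. t 0"]) simp
next
  case (Suc N)
  then obtain l where l: "\<forall>m\<le>N. (\<Sum>n\<le>m. A m n * l n) = t m" by auto
  define l' where "l' = l(Suc N := t (Suc N) - (\<Sum>n\<le>N. A (Suc N) n * l n))"
  have "(\<Sum>n\<le>m. A m n * l' n) = t m" if "m \<le> Suc N" for m
  proof (cases "m = Suc N")
    case True
    then show ?thesis using Suc.prems by (simp add: l'_def)
  next
    case False
    then have "(\<Sum>n\<le>m. A m n * l' n) = (\<Sum>n\<le>m. A m n * l n)"
      using that by (intro sum.cong) (auto simp: l'_def)
    then show ?thesis using l False that by simp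
  qed
  then show ?case by blast
qed

definition fun_scale :: "'a::field \<Rightarrow> ('b \<Rightarrow> 'a) \<Rightarrow> 'b \<Rightarrow> 'a" where
  "fun_scale c s = (\<lambda>K. c * s K)"

interpretation fun_vs: vector_space "fun_scale :: 'a::field \<Rightarrow> ('b \<Rightarrow> 'a) \<Rightarrow> _"
  by unfold_locales (auto simp: fun_scale_def fun_eq_iff algebra_simps)

lemma sum_fun_scale: "(\<Sum>x\<in>X. fun_scale (c x) (F x)) = (\<lambda>K. \<Sum>x\<in>X. c x * F x K)"
  by (rule ext) (simp add: sum_fun_apply fun_scale_def)

lemma span_lincomb:
  assumes "finite X" "\<And>x. x \<in> X \<Longrightarrow> c x = 0 \<or> F x \<in> fun_vs.span S"
  shows "(\<lambda>K. \<Sum>x\<in>X. c x * F x K) \<in> fun_vs.span S"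
  unfolding sum_fun_scale[symmetric]
proof (rule fun_vs.span_sum)
  fix x assume "x \<in> X"
  then consider "c x = 0" | "F x \<in> fun_vs.span S" using assms(2) by blast
  then show "fun_scale (c x) (F x) \<in> fun_vs.span S"
    by cases (simp_all add: fun_vs.span_zero fun_vs.span_scale)
qed

lemma linear_vact: "Vector_Spaces.linear fun_scale fun_scale (vact g f v)"
  unfolding Vector_Spaces.linear_iff
  by (simp add: fun_vs.vector_space_axioms vact_def fun_scale_def fun_eq_iff sum_distrib_left
      sum.distrib distrib_right mult.assoc)

lemma (in vector_space) unique_coordinates_enumeration:
  assumes e: "bij_betw e N B" and "independent B" "finite N" "x \<in> span B"
  shows "\<exists>!c. (\<forall>j. j \<notin> N \<longrightarrow> c j = 0) \<and> x = (\<Sum>j\<in>N. c j *s e j)"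
proof (rule ex_ex1I)
  have fin: "finite B" using e \<open>finite N\<close> bij_betw_finite by blast
  have inv: "inv_into N e v \<in> N" "e (inv_into N e v) = v" if "v \<in> B" for v
    using e that by (auto simp: bij_betw_def inv_into_into f_inv_into_f)
  have reindex: "(\<Sum>j\<in>N. c j *s e j) = (\<Sum>v\<in>B. c (inv_into N e v) *s v)" for c
  proof -
    have "(\<Sum>v\<in>B. c (inv_into N e v) *s v) = (\<Sum>j\<in>N. c (inv_into N e (e j)) *s e j)"
      by (rule sum.reindex_bij_betw[OF e, symmetric])
    also have "\<dots> = (\<Sum>j\<in>N. c j *s e j)"
      by (rule sum.cong) (simp_all add: bij_betw_inv_into_left[OF e])
    finally show ?thesis ..
  qed
  obtain u where u: "x = (\<Sum>v\<in>B. u v *s v)"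
    using \<open>x \<in> span B\<close> span_finite[OF fin] by auto
  have "x = (\<Sum>j\<in>N. (if j \<in> N then u (e j) else 0) *s e j)"
    unfolding u reindex using inv by (intro sum.cong) auto
  then show "\<exists>c. (\<forall>j. j \<notin> N \<longrightarrow> c j = 0) \<and> x = (\<Sum>j\<in>N. c j *s e j)"
    by (intro exI[of _ "\<lambda>j. if j \<in> N then u (e j) else 0"]) simp
  fix c1 c2
  assume c1: "(\<forall>j. j \<notin> N \<longrightarrow> c1 j = 0) \<and> x = (\<Sum>j\<in>N. c1 j *s e j)"
    and c2: "(\<forall>j. j \<notin> N \<longrightarrow> c2 j = 0) \<and> x = (\<Sum>j\<in>N. c2 j *s e j)"
  have indep: "\<forall>u. (\<forall>v\<in>B. u v = 0) \<or> (\<Sum>v\<in>B. u v *s v) \<noteq> 0"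
    using \<open>independent B\<close> dependent_finite[OF fin] by auto
  have "(\<Sum>v\<in>B. (c1 (inv_into N e v) - c2 (inv_into N e v)) *s v) = 0"
    using c1 c2 by (simp add: reindex scale_left_diff_distrib sum_subtractf)
  with indep[rule_format, of "\<lambda>v. c1 (inv_into N e v) - c2 (inv_into N e v)"]
  have "\<forall>v\<in>B. c1 (inv_into N e v) - c2 (inv_into N e v) = 0"
    by simp
  then have "c1 j = c2 j" if "j \<in> N" for j
    using that e by (metis bij_betwE bij_betw_inv_into_left right_minus_eq)
  then show "c1 = c2" using c1 c2 by (metis ext)
qed

lemma (in vector_space) enumerated_basis_in_spanning_set:
  assumes "G \<subseteq> V" "V \<subseteq> span G" "finite G"
  obtains e where "e ` {1..dim V} \<subseteq> G"
    "\<And>x. x \<in> V \<Longrightarrow> \<exists>!c. (\<forall>j. j \<notin> {1..dim V} \<longrightarrow> c j = 0) \<and> x = (\<Sum>j\<in>{1..dim V}. c j *s e j)"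
proof -
  obtain B where B: "B \<subseteq> G" "independent B" "G \<subseteq> span B"
    using maximal_independent_subset[of G] by blast
  have "V \<subseteq> span B" using assms(2) B(3) span_minimal[OF _ subspace_span] by blast
  then have "card B = dim V" using B assms(1) by (intro basis_card_eq_dim) auto
  moreover have "finite B" using B(1) assms(3) finite_subset by blast
  ultimately obtain e where e: "bij_betw e {1..dim V} B"
    using ex_bij_betw_nat_finite_1 by metis
  have "e ` {1..dim V} \<subseteq> G" using bij_betw_imp_surj_on[OF e] B(1) by simp
  moreover have "\<exists>!c. (\<forall>j. j \<notin> {1..dim V} \<longrightarrow> c j = 0) \<and> x = (\<Sum>j\<in>{1..dim V}. c j *s e j)"
    if "x \<in> V" for x
    by (rule unique_coordinates_enumeration[OF e B(2) finite_atLeastAtMost subsetD[OF \<open>V \<subseteq> span B\<close> that]])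
  ultimately show thesis by (rule that)
qed

lemma subspace_spin_space: "fun_vs.subspace (spin_space g)"
  by (auto simp: fun_vs.subspace_def spin_space_def fun_scale_def)

lemma dim_spin_space: "fun_vs.dim (spin_space g :: (nat set \<Rightarrow> 'a::field) set) = 2 ^ g"
proof -
  let ?B = "sbasis ` Pow {1..g} :: (nat set \<Rightarrow> 'a) set"
  have inj: "inj_on (sbasis :: nat set \<Rightarrow> nat set \<Rightarrow> 'a) X" for X
    by (rule inj_onI) (metis sbasis_def zero_neq_one)
  have "u v = 0" if "v \<in> ?B" and z: "(\<Sum>v\<in>?B. fun_scale (u v) v) = 0" for u v
  proof -
    obtain J0 where J0: "J0 \<subseteq> {1..g}" "v = sbasis J0" using \<open>v \<in> ?B\<close> by auto
    have "0 = (\<Sum>J\<in>Pow {1..g}. u (sbasis J) * sbasis J J0)"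
      using fun_cong[OF z, of J0] sum.reindex[OF inj, of "\<lambda>v. u v * v J0" "Pow {1..g}"]
      by (simp add: sum_fun_apply fun_scale_def)
    also have "\<dots> = u (sbasis J0)"
      using J0 by (simp add: sbasis_def if_distrib[of "\<lambda>x. _ * x"] cong: if_cong)
    finally show ?thesis using J0 by simp
  qed
  then have indep: "fun_vs.independent ?B"
    using fun_vs.dependent_finite[of ?B] by auto
  have span: "spin_space g \<subseteq> fun_vs.span ?B"
  proof
    fix s :: "nat set \<Rightarrow> 'a" assume "s \<in> spin_space g"
    have "(\<lambda>K. \<Sum>J\<in>Pow {1..g}. s J * sbasis J K) \<in> fun_vs.span ?B"
      by (rule span_lincomb) (auto intro: fun_vs.span_base)
    then show "s \<in> fun_vs.span ?B"
      using spin_space_expansion[OF \<open>s \<in> spin_space g\<close>] by simp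
  qed
  have "?B \<subseteq> spin_space g"
    by (auto simp: spin_space_def sbasis_def split: if_splits)
  from fun_vs.basis_card_eq_dim[OF this span indep]
  have "card ?B = fun_vs.dim (spin_space g :: (nat set \<Rightarrow> 'a) set)" .
  then show ?thesis by (simp add: card_image[OF inj] card_Pow)
qed

subsection \<open>The quadratic space of a split polynomial\<close>

locale split_hyperelliptic =
  fixes g :: nat and f :: "'a::field poly" and \<omega> :: "nat \<Rightarrow> 'a"
  assumes two_nonzero: "(2::'a) \<noteq> 0"
    and f_eq: "f = (\<Prod>i\<in>{1..2*g+1}. [:- \<omega> i, 1:])"
    and inj_roots: "inj_on \<omega> {1..2*g+1}"
begin

abbreviation R :: "nat set" where "R \<equiv> {1..2*g+1}"

abbreviation \<epsilon> :: "nat \<Rightarrow> 'a poly" where "\<epsilon> \<equiv> eps g \<omega>"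

definition eps_at :: "nat \<Rightarrow> 'a" where
  "eps_at a = poly (\<epsilon> a) (\<omega> a)"

lemma poly_eps_other_root: "a \<in> R \<Longrightarrow> b \<in> R \<Longrightarrow> b \<noteq> a \<Longrightarrow> poly (\<epsilon> a) (\<omega> b) = 0"
  unfolding eps_def poly_prod by (rule prod_zero) auto

lemma eps_at_nonzero: "a \<in> R \<Longrightarrow> eps_at a \<noteq> 0"
  unfolding eps_at_def eps_def poly_prod using inj_roots by (auto simp: inj_on_def)

lemma degree_eps: "a \<in> R \<Longrightarrow> degree (\<epsilon> a) = 2*g"
  unfolding eps_def by (subst degree_prod_eq_sum_degree) auto

lemma lead_coeff_eps: "lead_coeff (\<epsilon> a) = 1"
  unfolding eps_def lead_coeff_prod by simp

lemma coeff_eps_top: "a \<in> R \<Longrightarrow> coeff (\<epsilon> a) (2*g) = 1"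
  using lead_coeff_eps[of a] degree_eps[of a] by simp

lemma f_eq_eps_mult: "a \<in> R \<Longrightarrow> f = \<epsilon> a * [:- \<omega> a, 1:]"
  unfolding f_eq eps_def by (subst prod.remove[of R a]) (auto simp: mult.commute)

lemma degree_f: "degree f = 2*g+1"
  unfolding f_eq by (subst degree_prod_eq_sum_degree) auto

lemma coeff_f_top: "coeff f (2*g+1) = 1"
  using degree_f f_eq lead_coeff_prod[of "\<lambda>i. [:- \<omega> i, 1:]" R] by simp

lemma ccoef_0: "ccoef g f 0 = 1"
  using coeff_f_top by (simp add: ccoef_def)

lemma poly_f_root: "a \<in> R \<Longrightarrow> poly f (\<omega> a) = 0"
  using f_eq_eps_mult[of a] by simp

lemma eps_mult_mod: 
  assumes a: "a \<in> R"
  shows "(\<epsilon> a * h) mod f = smult (poly h (\<omega> a)) (\<epsilon> a)"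
proof -
  have "[:- \<omega> a, 1:] dvd h - [:poly h (\<omega> a):]"
    by (simp add: poly_eq_0_iff_dvd[symmetric])
  then have "\<epsilon> a * [:- \<omega> a, 1:] dvd \<epsilon> a * (h - [:poly h (\<omega> a):])"
    by (rule mult_dvd_mono[OF dvd_refl])
  then have "f dvd \<epsilon> a * h - smult (poly h (\<omega> a)) (\<epsilon> a)"
    using f_eq_eps_mult[OF a] by (simp add: right_diff_distrib)
  then have "(\<epsilon> a * h) mod f = smult (poly h (\<omega> a)) (\<epsilon> a) mod f"
    by (simp add: mod_eq_dvd_iff)
  also have "\<dots> = smult (poly h (\<omega> a)) (\<epsilon> a)"
    using degree_smult_le[of "poly h (\<omega> a)" "\<epsilon> a"] degree_eps[OF a] degree_f
    by (intro mod_poly_less) simp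
  finally show ?thesis .
qed

lemma pcoord_eps: "a \<in> R \<Longrightarrow> pcoord g f (\<epsilon> a) n = poly (pbas g f (2*g - n)) (\<omega> a)"
  unfolding pcoord_def psiV_def tauV_def by (simp add: eps_mult_mod coeff_eps_top)

lemma lagrange_interpolation:
  assumes q: "degree q \<le> 2*g"
  shows "q = (\<Sum>a\<in>R. smult (poly q (\<omega> a) / eps_at a) (\<epsilon> a))"
proof (rule poly_eqI_degree[where A = "\<omega> ` R"])
  fix x assume "x \<in> \<omega> ` R"
  then obtain b where b: "b \<in> R" "x = \<omega> b" by auto
  have "poly (\<Sum>a\<in>R. smult (poly q (\<omega> a) / eps_at a) (\<epsilon> a)) x =
      (\<Sum>a\<in>R. if a = b then poly q (\<omega> b) else 0)"
    unfolding poly_sum poly_smult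
    using b eps_at_nonzero poly_eps_other_root by (intro sum.cong) (auto simp: eps_at_def)
  then show "poly q x = poly (\<Sum>a\<in>R. smult (poly q (\<omega> a) / eps_at a) (\<epsilon> a)) x"
    using b by simp
next
  have card: "card (\<omega> ` R) = 2*g+1" using inj_roots by (simp add: card_image)
  then show "degree q < card (\<omega> ` R)" using q by simp
  have "degree (\<Sum>a\<in>R. smult (poly q (\<omega> a) / eps_at a) (\<epsilon> a)) \<le> 2*g"
    by (rule degree_sum_le) (auto intro: order.trans[OF degree_smult_le] simp: degree_eps)
  then show "degree (\<Sum>a\<in>R. smult (poly q (\<omega> a) / eps_at a) (\<epsilon> a)) < card (\<omega> ` R)"
    using card by simp
qed

lemma lagrange_functional:
  assumes "degree q \<le> 2*g"
  shows "(\<Sum>n\<le>2*g. coeff q n * l n) = (\<Sum>a\<in>R. poly q (\<omega> a) / eps_at a * (\<Sum>n\<le>2*g. coeff (\<epsilon> a) n * l n))"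
proof -
  have "(\<Sum>n\<le>2*g. coeff q n * l n) = (\<Sum>n\<le>2*g. \<Sum>a\<in>R. poly q (\<omega> a) / eps_at a * (coeff (\<epsilon> a) n * l n))"
    by (subst lagrange_interpolation[OF assms]) (simp only: coeff_sum coeff_smult sum_distrib_right mult.assoc)
  also have "\<dots> = (\<Sum>a\<in>R. poly q (\<omega> a) / eps_at a * (\<Sum>n\<le>2*g. coeff (\<epsilon> a) n * l n))"
    unfolding sum_distrib_left by (rule sum.swap)
  finally show ?thesis .
qed

lemma residue_sum:
  assumes "degree q \<le> 2*g"
  shows "coeff q (2*g) = (\<Sum>a\<in>R. poly q (\<omega> a) / eps_at a)"
  by (subst lagrange_interpolation[OF assms]) (simp add: coeff_sum coeff_eps_top)

lemma residue_sum_monomial: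
  assumes h: "degree h \<le> g" and m: "m \<le> g"
  shows "(\<Sum>a\<in>R. poly h (\<omega> a) / eps_at a * \<omega> a ^ m) = coeff h (2*g - m)"
proof -
  have "degree (monom 1 m * h) \<le> 2*g"
    using degree_mult_le[of "monom 1 m" h] h m by (simp add: degree_monom_eq)
  from residue_sum[OF this] have "coeff h (2*g - m) = (\<Sum>a\<in>R. poly (monom 1 m * h) (\<omega> a) / eps_at a)"
    using m by (simp add: coeff_monom_mult)
  then show ?thesis by (simp add: poly_monom mult.commute)
qed

lemma pbas_low: "m \<le> g \<Longrightarrow> pbas g f m = monom 1 m"
  by (simp add: pbas_def)

lemma pbas_high:
  "1 \<le> i \<Longrightarrow> pbas g f (g + i) = monom 1 (g + i) + (\<Sum>j\<in>{1..2*i-1}. monom (ccoef g f j) (g + i - j))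
     + monom (ccoef g f (2*i) / 2) (g - i)"
  by (simp add: pbas_def Let_def)

lemma poly_pbas_high:
  assumes i: "1 \<le> i" "i \<le> g"
  shows "poly (pbas g f (g + i)) x = x ^ (g - i) * (head_poly (ccoef g f) (2*i) x - ccoef g f (2*i) / 2)"
proof -
  let ?c = "ccoef g f"
  have split: "{..2*i} = insert 0 (insert (2*i) {1..2*i-1})" using i by auto
  have shift: "x ^ (g - i) * x ^ (2*i - l) = x ^ (g + i - l)" if "l \<le> 2*i" for l
  proof -
    have "g - i + (2*i - l) = g + i - l" using that i by simp
    then show ?thesis by (simp only: power_add[symmetric])
  qed
  have "x ^ (g - i) * head_poly ?c (2*i) x =
      x ^ (g + i) + ?c (2*i) * x ^ (g - i) + (\<Sum>l\<in>{1..2*i-1}. ?c l * x ^ (g + i - l))"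
  proof -
    have "x ^ (g - i) * (\<Sum>l\<in>{1..2*i-1}. ?c l * x ^ (2*i - l)) = (\<Sum>l\<in>{1..2*i-1}. ?c l * x ^ (g + i - l))"
      unfolding sum_distrib_left by (rule sum.cong) (auto simp: mult.left_commute shift)
    then show ?thesis
      unfolding head_poly_def split using i shift[of 0] by (simp add: ccoef_0 algebra_simps)
  qed
  moreover have "poly (pbas g f (g + i)) x =
      x ^ (g + i) + (\<Sum>l\<in>{1..2*i-1}. ?c l * x ^ (g + i - l)) + ?c (2*i) / 2 * x ^ (g - i)"
    using i by (simp add: pbas_high poly_sum poly_monom)
  ultimately show ?thesis using two_nonzero by (simp add: algebra_simps)
qed

lemma coeff_pbas:
  assumes "m \<le> 2*g"
  shows "coeff (pbas g f m) m = 1" "m < n \<Longrightarrow> coeff (pbas g f m) n = 0"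
proof -
  have "coeff (pbas g f m) m = 1 \<and> (m < n \<longrightarrow> coeff (pbas g f m) n = 0)"
  proof (cases "m \<le> g")
    case True
    then show ?thesis by (simp add: pbas_low)
  next
    case False
    define i where "i = m - g"
    have i: "m = g + i" "1 \<le> i" "i \<le> g"
      using assms False by (auto simp: i_def)
    have "coeff (\<Sum>j\<in>{1..2*i-1}. monom (ccoef g f j) (g + i - j)) k = 0" if "g + i \<le> k" for k
      unfolding coeff_sum using that i by (intro sum.neutral) auto
    then show ?thesis unfolding i(1) pbas_high[OF i(2)] using i by auto
  qed
  then show "coeff (pbas g f m) m = 1" "m < n \<Longrightarrow> coeff (pbas g f m) n = 0" by auto
qed

lemma degree_pbas: "m \<le> 2*g \<Longrightarrow> degree (pbas g f m) \<le> m"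
  by (rule degree_le) (auto intro: coeff_pbas(2))

lemma poly_f_head_poly: "poly f x = head_poly (ccoef g f) (2*g+1) x"
proof -
  have "poly f x = (\<Sum>i\<le>2*g+1. coeff f i * x ^ i)"
    by (simp add: poly_altdef degree_f)
  also have "\<dots> = (\<Sum>i\<le>2*g+1. coeff f (2*g+1 - i) * x ^ (2*g+1 - i))"
    by (subst sum.atLeastAtMost_rev[of _ 0, simplified atLeast0AtMost]) simp
  finally show ?thesis by (simp add: head_poly_def ccoef_def)
qed

lemma pform_pcoord_eps:
  assumes a: "a \<in> R" and b: "b \<in> R"
  shows "pform g (pcoord g f (\<epsilon> a)) (pcoord g f (\<epsilon> b)) = head_quotient (ccoef g f) g (\<omega> a) (\<omega> b)"
proof -
  let ?c = "ccoef g f" and ?x = "\<omega> a" and ?y = "\<omega> b"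
  let ?P = "\<lambda>m z. poly (pbas g f m) z"
  have "pform g (pcoord g f (\<epsilon> a)) (pcoord g f (\<epsilon> b)) = (\<Sum>m\<le>2*g. ?P m ?x * ?P (2*g - m) ?y)"
    unfolding pform_def pcoord_eps[OF a] pcoord_eps[OF b]
    by (rule sum.reindex_bij_witness[where i = "\<lambda>m. 2*g - m" and j = "\<lambda>m. 2*g - m"]) auto
  also have "\<dots> = (\<Sum>i=1..g. ?P (g + i) ?x * ?P (g - i) ?y) + (\<Sum>i=1..g. ?P (g - i) ?x * ?P (g + i) ?y)
      + ?P g ?x * ?P g ?y"
    by (simp add: sum_atMost_centered)
  also have "\<dots> = (\<Sum>i=1..g. (?x * ?y) ^ (g - i) * (head_poly ?c (2*i) ?x + head_poly ?c (2*i) ?y - ?c (2*i)))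
      + (?x * ?y) ^ g"
  proof -
    have "?P (g + i) ?x * ?P (g - i) ?y + ?P (g - i) ?x * ?P (g + i) ?y =
        (?x * ?y) ^ (g - i) * (head_poly ?c (2*i) ?x + head_poly ?c (2*i) ?y - ?c (2*i))"
      if "i \<in> {1..g}" for i
    proof -
      have "?c (2*i) = ?c (2*i) / 2 + ?c (2*i) / 2" using two_nonzero by (simp add: field_simps)
      then show ?thesis
        using that two_nonzero by (simp add: poly_pbas_high pbas_low poly_monom algebra_simps)
    qed
    then show ?thesis
      by (simp add: sum.distrib[symmetric] pbas_low poly_monom power_mult_distrib)
  qed
  also have "\<dots> = head_quotient ?c g ?x ?y"
    by (simp add: head_quotient_def atMost_atLeast0 sum.atLeast_Suc_atMost[of 0] head_poly_def ccoef_0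
        add.commute)
  finally show ?thesis .
qed

lemma pform_pcoord_eps_eq_0:
  assumes a: "a \<in> R" and b: "b \<in> R" and "a \<noteq> b"
  shows "pform g (pcoord g f (\<epsilon> a)) (pcoord g f (\<epsilon> b)) = 0"
proof -
  have "(\<omega> a - \<omega> b) * pform g (pcoord g f (\<epsilon> a)) (pcoord g f (\<epsilon> b)) = poly f (\<omega> a) - poly f (\<omega> b)"
    by (simp add: pform_pcoord_eps[OF a b] head_quotient_eq poly_f_head_poly)
  also have "\<dots> = 0" using poly_f_root[OF a] poly_f_root[OF b] by simp
  finally show ?thesis using inj_onD[OF inj_roots _ a b] \<open>a \<noteq> b\<close> by auto
qed

subsection \<open>Clifford products of the \<open>\<epsilon>\<^sub>i\<close>\<close>

abbreviation eps_op :: "nat \<Rightarrow> (nat set \<Rightarrow> 'a) \<Rightarrow> nat set \<Rightarrow> 'a" where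
  "eps_op a \<equiv> vact g f (\<epsilon> a)"

lemma eps_op_anticomm_sum:
  assumes "s \<in> spin_space g"
  shows "eps_op a (eps_op b s) K + eps_op b (eps_op a s) K =
    2 * pform g (pcoord g f (\<epsilon> a)) (pcoord g f (\<epsilon> b)) * s K"
proof -
  have "eps_op a (eps_op b s) = spin_act g (pcoord g f (\<epsilon> a)) (spin_act g (pcoord g f (\<epsilon> b)) s)" for a b
    using vact_eq_spin_act[OF vact_in_spin_space] vact_eq_spin_act[OF assms] by metis
  moreover have "\<And>K. infinite K \<Longrightarrow> s K = 0" using spin_space_infinite[OF assms] .
  ultimately show ?thesis by (simp add: spin_act_anticomm)
qed

lemma eps_op_anticomm:
  "a \<in> R \<Longrightarrow> b \<in> R \<Longrightarrow> a \<noteq> b \<Longrightarrow> s \<in> spin_space g \<Longrightarrow>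
    eps_op a (eps_op b s) = (\<lambda>K. - eps_op b (eps_op a s) K)"
  using eps_op_anticomm_sum pform_pcoord_eps_eq_0 by (fastforce simp: eq_neg_iff_add_eq_0)

lemma eps_op_square:
  assumes "s \<in> spin_space g"
  shows "eps_op a (eps_op a s) = (\<lambda>K. pform g (pcoord g f (\<epsilon> a)) (pcoord g f (\<epsilon> a)) * s K)"
proof
  fix K
  have "2 * eps_op a (eps_op a s) K = 2 * (pform g (pcoord g f (\<epsilon> a)) (pcoord g f (\<epsilon> a)) * s K)"
    using eps_op_anticomm_sum[OF assms, of a a K] by (simp add: mult.assoc)
  then show "eps_op a (eps_op a s) K = pform g (pcoord g f (\<epsilon> a)) (pcoord g f (\<epsilon> a)) * s K"
    using two_nonzero by simp
qed

lemma vact_scale: "vact g f v (\<lambda>K. c * t K) = (\<lambda>K. c * vact g f v t K)"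
  by (simp add: vact_def sum_distrib_left mult.assoc)

definition eps_prod :: "nat set \<Rightarrow> (nat set \<Rightarrow> 'a) \<Rightarrow> nat set \<Rightarrow> 'a" where
  "eps_prod L = vact_list g f (map \<epsilon> (sorted_list_of_set L))"

lemma eps_prod_empty [simp]: "eps_prod {} s = s"
  by (simp add: eps_prod_def)

lemma eps_prod_insert_min:
  "finite A \<Longrightarrow> \<forall>x\<in>A. b < x \<Longrightarrow> eps_prod (insert b A) s = eps_op b (eps_prod A s)"
  by (auto simp: eps_prod_def insort_is_Cons less_imp_le)

lemma vact_list_append: "vact_list g f (xs @ ys) s = vact_list g f xs (vact_list g f ys s)"
  by (induction xs) simp_all

lemma eps_prod_insert_max:
  "finite A \<Longrightarrow> \<forall>x\<in>A. x < b \<Longrightarrow> eps_prod (insert b A) s = eps_prod A (eps_op b s)"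
  by (auto simp: eps_prod_def sorted_insort_is_snoc less_imp_le vact_list_append)

lemma eps_prod_in_spin_space: "s \<in> spin_space g \<Longrightarrow> eps_prod L s \<in> spin_space g"
  unfolding eps_prod_def by (cases "sorted_list_of_set L") (simp_all add: vact_in_spin_space)

lemma vact_list_scale: "vact_list g f vs (\<lambda>K. c * t K) = (\<lambda>K. c * vact_list g f vs t K)"
  by (induction vs) (simp_all add: vact_scale)

lemma eps_prod_scale: "eps_prod L (\<lambda>K. c * t K) = (\<lambda>K. c * eps_prod L t K)"
  by (simp add: eps_prod_def vact_list_scale)

definition toggle :: "nat set \<Rightarrow> nat \<Rightarrow> nat set" where
  "toggle L a = (if a \<in> L then L - {a} else insert a L)"

lemma toggle_subset: "L \<subseteq> R \<Longrightarrow> a \<in> R \<Longrightarrow> toggle L a \<subseteq> R"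
  by (auto simp: toggle_def)

lemma finite_toggle: "finite L \<Longrightarrow> finite (toggle L a)"
  by (simp add: toggle_def)

lemma eps_op_eps_prod:
  assumes "finite L" "L \<subseteq> R" "a \<in> R" "s \<in> spin_space g"
  shows "\<exists>c. eps_op a (eps_prod L s) = (\<lambda>K. c * eps_prod (toggle L a) s K)"
  using assms(1,2)
proof (induction L rule: finite_linorder_min_induct)
  case empty
  then show ?case by (intro exI[of _ 1]) (simp add: toggle_def eps_prod_insert_min)
next
  case (insert b A)
  have b: "b \<in> R" and bA: "b \<notin> A" using insert by auto
  consider "a < b" | "a = b" | "b < a" by linarith
  then show ?case
  proof cases
    case 1
    then have "toggle (insert b A) a = insert a (insert b A)"
      using insert.hyps(2) by (auto simp: toggle_def)
    moreover have "eps_prod (insert a (insert b A)) s = eps_op a (eps_prod (insert b A) s)"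
      using 1 insert.hyps by (intro eps_prod_insert_min) auto
    ultimately show ?thesis by (intro exI[of _ 1]) simp
  next
    case 2
    then have "toggle (insert b A) a = A" using bA by (auto simp: toggle_def)
    then show ?thesis
      using 2 eps_op_square[OF eps_prod_in_spin_space[OF assms(4)]] eps_prod_insert_min[OF insert.hyps(1,2)]
      by auto
  next
    case 3
    obtain c where c: "eps_op a (eps_prod A s) = (\<lambda>K. c * eps_prod (toggle A a) s K)"
      using insert.IH insert.prems by auto
    have "toggle (insert b A) a = insert b (toggle A a)" using 3 bA by (auto simp: toggle_def)
    moreover have "\<forall>x\<in>toggle A a. b < x" using 3 insert.hyps(2) by (auto simp: toggle_def)
    moreover have "eps_op a (eps_prod (insert b A) s) = (\<lambda>K. - eps_op b (eps_op a (eps_prod A s)) K)"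
      using eps_prod_insert_min[OF insert.hyps(1,2)] 3 b
        eps_op_anticomm[OF assms(3) b _ eps_prod_in_spin_space[OF assms(4)]] by simp
    ultimately show ?thesis
      using insert.hyps(1) by (intro exI[of _ "- c"]) (simp add: c vact_scale eps_prod_insert_min finite_toggle)
  qed
qed

lemma eps_prod_eps_op:
  assumes "finite L" "L \<subseteq> R" "a \<in> R" "s \<in> spin_space g"
  shows "\<exists>c. eps_prod L (eps_op a s) = (\<lambda>K. c * eps_prod (toggle L a) s K)"
  using assms(1,2)
proof (induction L rule: finite_linorder_min_induct)
  case empty
  then show ?case by (intro exI[of _ 1]) (simp add: toggle_def eps_prod_insert_min)
next
  case (insert b A)
  have b: "b \<in> R" and bA: "b \<notin> A" using insert by auto
  obtain c where c: "eps_prod A (eps_op a s) = (\<lambda>K. c * eps_prod (toggle A a) s K)"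
    using insert.IH insert.prems by auto
  obtain d where d: "eps_op b (eps_prod (toggle A a) s) = (\<lambda>K. d * eps_prod (toggle (toggle A a) b) s K)"
    using eps_op_eps_prod[OF finite_toggle[OF insert.hyps(1)] toggle_subset b assms(4)] insert.prems assms(3)
    by auto
  have "toggle (toggle A a) b = toggle (insert b A) a" using bA by (auto simp: toggle_def)
  then have "eps_prod (insert b A) (eps_op a s) = (\<lambda>K. (c * d) * eps_prod (toggle (insert b A) a) s K)"
    using eps_prod_insert_min[OF insert.hyps(1,2)] by (simp add: c d vact_scale mult.assoc)
  then show ?case by blast
qed

lemma eps_prod_lincomb: "eps_prod L (\<lambda>K. \<Sum>x\<in>X. c x * t x K) = (\<lambda>K. \<Sum>x\<in>X. c x * eps_prod L (t x) K)"
  by (simp add: eps_prod_def vact_list_lincomb)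

subsection \<open>The vectors \<open>\<epsilon>\<^sub>I \<cdot> 1\<close> span \<open>S\<close>\<close>

abbreviation eps_vec :: "nat set \<Rightarrow> nat set \<Rightarrow> 'a" where
  "eps_vec I \<equiv> eps_prod I one_S"

text \<open>By Lagrange interpolation the left-hand side is \<open>h \<cdot> 1\<close>; as \<open>deg h \<le> g\<close>, \<open>h\<close> has no
  \<open>E\<close>-component, its \<open>F\<close>-component kills \<open>1\<close>, and \<open>p\<^sub>g\<close> fixes \<open>1\<close>.\<close>

lemma lagrange_relation_one:
  assumes h: "degree h \<le> g"
  shows "(\<lambda>K. \<Sum>a\<in>R. poly h (\<omega> a) / eps_at a * eps_op a one_S K) = (\<lambda>K. coeff h g * one_S K)"
proof
  fix K
  let ?c = "\<lambda>a. poly h (\<omega> a) / eps_at a"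
  have coord: "(\<Sum>a\<in>R. ?c a * pcoord g f (\<epsilon> a) (g + i)) = coeff h (g + i)" if "i \<le> g" for i
  proof -
    have "(\<Sum>a\<in>R. ?c a * pcoord g f (\<epsilon> a) (g + i)) = (\<Sum>a\<in>R. ?c a * \<omega> a ^ (g - i))"
      using that by (intro sum.cong) (simp_all add: pcoord_eps pbas_low poly_monom)
    then show ?thesis using residue_sum_monomial[OF h, of "g - i"] that by simp
  qed
  have "(\<Sum>a\<in>R. ?c a * eps_op a one_S K) = spin_act g (\<lambda>n. \<Sum>a\<in>R. ?c a * pcoord g f (\<epsilon> a) n) one_S K"
    unfolding vact_eq_spin_act[OF one_S_in_spin_space] by (rule sum_spin_act)
  also have "\<dots> = coeff h g * one_S K"
    using coord[of 0] coord h by (simp add: spin_act_one coeff_eq_0)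
  finally show "(\<Sum>a\<in>R. ?c a * eps_op a one_S K) = coeff h g * one_S K" .
qed

lemma lagrange_relation:
  assumes "degree h \<le> g"
  shows "(\<lambda>K. coeff h g * eps_vec J K) =
    (\<lambda>K. \<Sum>a\<in>R. poly h (\<omega> a) / eps_at a * eps_prod J (eps_op a one_S) K)"
proof -
  have "(\<lambda>K. coeff h g * eps_vec J K) = eps_prod J (\<lambda>K. coeff h g * one_S K)"
    by (simp add: eps_prod_scale)
  also have "\<dots> = eps_prod J (\<lambda>K. \<Sum>a\<in>R. poly h (\<omega> a) / eps_at a * eps_op a one_S K)"
    unfolding lagrange_relation_one[OF assms] ..
  finally show ?thesis by (simp only: eps_prod_lincomb)
qed

lemma eps_prod_eps_op_one:
  "I \<subseteq> R \<Longrightarrow> \<exists>d. \<forall>a\<in>R. eps_prod I (eps_op a one_S) = (\<lambda>K. d a * eps_vec (toggle I a) K)"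
  using eps_prod_eps_op[OF finite_subset[OF _ finite_atLeastAtMost] _ _ one_S_in_spin_space]
  by (intro bchoice) blast

definition vanishing_poly :: "nat set \<Rightarrow> 'a poly" where
  "vanishing_poly Z = (\<Prod>z\<in>Z. [:- \<omega> z, 1:])"

lemma degree_vanishing_poly: "Z \<subseteq> R \<Longrightarrow> degree (vanishing_poly Z) = card Z"
  unfolding vanishing_poly_def by (subst degree_prod_eq_sum_degree) auto

lemma lead_coeff_vanishing_poly: "lead_coeff (vanishing_poly Z) = 1"
  by (simp add: vanishing_poly_def lead_coeff_prod)

lemma poly_vanishing_poly_eq_0_iff:
  assumes "Z \<subseteq> R" "a \<in> R"
  shows "poly (vanishing_poly Z) (\<omega> a) = 0 \<longleftrightarrow> a \<in> Z"
proof -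
  have "finite Z" using assms(1) finite_subset by blast
  moreover have "\<omega> a = \<omega> z \<longleftrightarrow> a = z" if "z \<in> Z" for z
    using inj_onD[OF inj_roots, of a z] assms that by auto
  ultimately show ?thesis by (auto simp: vanishing_poly_def poly_prod)
qed

abbreviation g_subsets :: "nat set set" where
  "g_subsets \<equiv> {J. J \<subseteq> R \<and> card J = g}"

lemma eps_vec_small_in_span:
  "I \<subseteq> R \<Longrightarrow> card I \<le> g \<Longrightarrow> eps_vec I \<in> fun_vs.span (eps_vec ` g_subsets)"
proof (induction "g - card I" arbitrary: I)
  case 0
  then show ?case by (auto intro: fun_vs.span_base)
next
  case (Suc n)
  have fin: "finite I" using Suc.prems(1) finite_subset by blast
  define h where "h = monom 1 (g - card I) * vanishing_poly I"
  have deg: "degree (vanishing_poly I) = card I" and lc: "coeff (vanishing_poly I) (card I) = 1"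
    using degree_vanishing_poly[OF Suc.prems(1)] lead_coeff_vanishing_poly[of I] by simp_all
  then have "vanishing_poly I \<noteq> 0" by auto
  then have "degree h = g"
    using deg Suc.prems(2) by (simp add: h_def degree_mult_eq degree_monom_eq)
  have "coeff h g = 1"
    using lc Suc.prems(2) by (simp add: h_def coeff_monom_mult)
  obtain d where d: "\<forall>a\<in>R. eps_prod I (eps_op a one_S) = (\<lambda>K. d a * eps_vec (toggle I a) K)"
    using eps_prod_eps_op_one[OF Suc.prems(1)] by blast
  have "eps_vec I = (\<lambda>K. \<Sum>a\<in>R. poly h (\<omega> a) / eps_at a * eps_prod I (eps_op a one_S) K)"
    using lagrange_relation[of h I] \<open>degree h = g\<close> \<open>coeff h g = 1\<close> by simp
  also have "\<dots> = (\<lambda>K. \<Sum>a\<in>R. (poly h (\<omega> a) / eps_at a * d a) * eps_vec (toggle I a) K)"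
    using d by (simp add: mult.assoc)
  also have "\<dots> \<in> fun_vs.span (eps_vec ` g_subsets)"
  proof (rule span_lincomb)
    fix a assume a: "a \<in> R"
    show "poly h (\<omega> a) / eps_at a * d a = 0 \<or> eps_vec (toggle I a) \<in> fun_vs.span (eps_vec ` g_subsets)"
    proof (cases "a \<in> I")
      case True
      then show ?thesis
        using poly_vanishing_poly_eq_0_iff[OF Suc.prems(1) a] by (simp add: h_def)
    next
      case False
      then show ?thesis
        using Suc fin a by (simp add: toggle_def)
    qed
  qed simp
  finally show ?case .
qed

text \<open>For \<open>|I| > g\<close>, take \<open>h\<close> vanishing off \<open>I\<close>: the relation for \<open>I - {max I}\<close> expresses \<open>\<epsilon>\<^sub>I \<cdot> 1\<close>
  through vectors of smaller index sets.\<close>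

lemma eps_vec_in_span:
  "I \<subseteq> R \<Longrightarrow> eps_vec I \<in> fun_vs.span (eps_vec ` g_subsets)"
proof (induction "card I" arbitrary: I rule: less_induct)
  case less
  show ?case
  proof (cases "card I \<le> g")
    case True
    then show ?thesis by (rule eps_vec_small_in_span[OF less.prems])
  next
    case False
    have fin: "finite I" using less.prems finite_subset by blast
    define i0 where "i0 = Max I"
    define I' where "I' = I - {i0}"
    have "I \<noteq> {}" using False by auto
    then have "i0 \<in> I" using fin by (simp add: i0_def)
    then have i0: "i0 \<in> I" "i0 \<in> R" using less.prems by auto
    have I': "I' \<subseteq> R" "finite I'" "card I' < card I" "I = insert i0 I'"
      using fin i0 less.prems card_Diff1_less[OF fin i0(1)] by (auto simp: I'_def)
    have "\<forall>x\<in>I'. x < i0"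
      using fin by (auto simp: I'_def i0_def order.not_eq_order_implies_strict)
    define h where "h = vanishing_poly (R - I)"
    have "degree h \<le> g"
      using degree_vanishing_poly[of "R - I"] False less.prems fin by (simp add: h_def card_Diff_subset)
    define c where "c a = poly h (\<omega> a) / eps_at a" for a
    have c: "c a = 0 \<longleftrightarrow> a \<in> R - I" if "a \<in> R" for a
      using poly_vanishing_poly_eq_0_iff[of "R - I" a] eps_at_nonzero[of a] that by (auto simp: c_def h_def)
    obtain d where d: "\<forall>a\<in>R. eps_prod I' (eps_op a one_S) = (\<lambda>K. d a * eps_vec (toggle I' a) K)"
      using eps_prod_eps_op_one[OF I'(1)] by blast
    have "(\<Sum>a\<in>R. c a * eps_prod I' (eps_op a one_S) K) =
        c i0 * eps_vec I K + (\<Sum>a\<in>R - {i0}. (c a * d a) * eps_vec (toggle I' a) K)" for K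
    proof -
      have "eps_prod I' (eps_op i0 one_S) = eps_vec I"
        using eps_prod_insert_max[OF I'(2) \<open>\<forall>x\<in>I'. x < i0\<close>] I'(4) by simp
      moreover have "(\<Sum>a\<in>R - {i0}. c a * eps_prod I' (eps_op a one_S) K) =
          (\<Sum>a\<in>R - {i0}. (c a * d a) * eps_vec (toggle I' a) K)"
        using d by (intro sum.cong) (auto simp: mult.assoc)
      ultimately show ?thesis
        by (simp only: sum.remove[OF finite_atLeastAtMost i0(2)])
    qed
    then have "fun_scale (coeff h g) (eps_vec I') =
        (\<lambda>K. c i0 * eps_vec I K + (\<Sum>a\<in>R - {i0}. (c a * d a) * eps_vec (toggle I' a) K))"
      using lagrange_relation[OF \<open>degree h \<le> g\<close>, of I'] unfolding fun_scale_def c_def by simp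
    then have "fun_scale (c i0) (eps_vec I) =
        fun_scale (coeff h g) (eps_vec I') - (\<lambda>K. \<Sum>a\<in>R - {i0}. (c a * d a) * eps_vec (toggle I' a) K)"
      by (simp add: fun_scale_def fun_eq_iff)
    also have "\<dots> \<in> fun_vs.span (eps_vec ` g_subsets)"
    proof (intro fun_vs.span_diff fun_vs.span_scale span_lincomb)
      show "eps_vec I' \<in> fun_vs.span (eps_vec ` g_subsets)" using less.hyps I' by blast
      fix a assume a: "a \<in> R - {i0}"
      show "c a * d a = 0 \<or> eps_vec (toggle I' a) \<in> fun_vs.span (eps_vec ` g_subsets)"
      proof (cases "a \<in> I")
        case True
        then have "toggle I' a = I' - {a}" "a \<in> I'" using a by (auto simp: toggle_def I'_def)
        moreover have "card (I' - {a}) < card I" using I'(3) card_Diff1_le[of I' a] by linarith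
        moreover have "I' - {a} \<subseteq> R" using I'(1) by auto
        ultimately show ?thesis using less.hyps by simp
      qed (use a c in simp)
    qed simp
    finally have "fun_scale (inverse (c i0)) (fun_scale (c i0) (eps_vec I)) \<in> fun_vs.span (eps_vec ` g_subsets)"
      by (rule fun_vs.span_scale)
    then show ?thesis using c[OF i0(2)] i0(1) by (simp add: fun_scale_def mult.assoc[symmetric])
  qed
qed

lemma evaluation_combination_exists:
  "\<exists>c. \<forall>m\<le>2*g. (\<Sum>a\<in>R. c a * poly (pbas g f m) (\<omega> a)) = t m"
proof -
  obtain l where l: "\<forall>m\<le>2*g. (\<Sum>n\<le>m. coeff (pbas g f m) n * l n) = t m"
    using lower_unitriangular_solvable[of "2*g" "\<lambda>m n. coeff (pbas g f m) n"] coeff_pbas(1) by blast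
  define c where "c a = (\<Sum>n\<le>2*g. coeff (\<epsilon> a) n * l n) / eps_at a" for a
  have "(\<Sum>a\<in>R. c a * poly (pbas g f m) (\<omega> a)) = t m" if m: "m \<le> 2*g" for m
  proof -
    have "(\<Sum>a\<in>R. c a * poly (pbas g f m) (\<omega> a)) = (\<Sum>n\<le>2*g. coeff (pbas g f m) n * l n)"
      using lagrange_functional[OF order.trans[OF degree_pbas[OF m] m]]
      by (simp add: c_def mult.commute)
    also have "\<dots> = (\<Sum>n\<le>m. coeff (pbas g f m) n * l n)"
      using m coeff_pbas(2)[OF m] by (intro sum.mono_neutral_right) auto
    finally show ?thesis using l m by simp
  qed
  then show ?thesis by blast
qed

lemma wedge_op_eq_sum_eps_op:
  assumes k: "k \<in> {1..g}"
  shows "\<exists>c. \<forall>s\<in>spin_space g. wedge_op k s = (\<lambda>K. \<Sum>a\<in>R. c a * eps_op a s K)"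
proof -
  obtain c where c: "\<forall>m\<le>2*g. (\<Sum>a\<in>R. c a * poly (pbas g f m) (\<omega> a)) = (if m = g - k then 1 else 0)"
    using evaluation_combination_exists[of "\<lambda>m. if m = g - k then 1 else 0"] ..
  have coord: "(\<Sum>a\<in>R. c a * pcoord g f (\<epsilon> a) n) = (if n = g + k then 1 else 0)" if n: "n \<le> 2*g" for n
  proof -
    have "(\<Sum>a\<in>R. c a * pcoord g f (\<epsilon> a) n) = (\<Sum>a\<in>R. c a * poly (pbas g f (2*g - n)) (\<omega> a))"
      by (rule sum.cong) (simp_all add: pcoord_eps)
    also have "\<dots> = (if 2*g - n = g - k then 1 else 0)"
      using c by (simp del: One_nat_def)
    also have "(2*g - n = g - k) = (n = g + k)"
      using n k by auto
    finally show ?thesis .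
  qed
  have "wedge_op k s = (\<lambda>K. \<Sum>a\<in>R. c a * eps_op a s K)" if s: "s \<in> spin_space g" for s
  proof
    fix K
    have "(\<Sum>a\<in>R. c a * eps_op a s K) = spin_act g (\<lambda>n. \<Sum>a\<in>R. c a * pcoord g f (\<epsilon> a) n) s K"
      unfolding vact_eq_spin_act[OF s] by (rule sum_spin_act)
    also have "\<dots> = (\<Sum>n\<le>2*g. if n = g + k then spin_gen g n s K else 0)"
      unfolding spin_act_def
    proof (rule sum.cong[OF refl])
      fix n assume "n \<in> {..2*g}"
      then have cn: "(\<Sum>a\<in>R. c a * pcoord g f (\<epsilon> a) n) = (if n = g + k then 1 else 0)"
        by (intro coord) simp
      show "(\<Sum>a\<in>R. c a * pcoord g f (\<epsilon> a) n) * spin_gen g n s K =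
          (if n = g + k then spin_gen g n s K else 0)"
        unfolding cn by simp
    qed
    also have "\<dots> = wedge_op k s K"
      using k by (simp add: spin_gen_def)
    finally show "wedge_op k s K = (\<Sum>a\<in>R. c a * eps_op a s K)" ..
  qed
  then show ?thesis by blast
qed

lemma span_eps_vec_subset_spin_space: "fun_vs.span (eps_vec ` Pow R) \<subseteq> spin_space g"
  by (rule fun_vs.span_minimal) (auto intro: subspace_spin_space eps_prod_in_spin_space one_S_in_spin_space)

lemma eps_op_in_span:
  assumes "u \<in> fun_vs.span (eps_vec ` Pow R)" "a \<in> R"
  shows "eps_op a u \<in> fun_vs.span (eps_vec ` Pow R)"
proof -
  have "eps_op a (eps_vec I) \<in> fun_vs.span (eps_vec ` Pow R)" if I: "I \<subseteq> R" for I
  proof -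
    obtain c where "eps_op a (eps_vec I) = fun_scale c (eps_vec (toggle I a))"
      using eps_op_eps_prod[OF finite_subset[OF I finite_atLeastAtMost] I assms(2) one_S_in_spin_space]
      by (auto simp: fun_scale_def)
    then show ?thesis
      using toggle_subset[OF I assms(2)] by (auto intro: fun_vs.span_scale fun_vs.span_base)
  qed
  then have "fun_vs.span (eps_op a ` eps_vec ` Pow R) \<subseteq> fun_vs.span (eps_vec ` Pow R)"
    by (intro fun_vs.span_minimal) auto
  moreover have "eps_op a u \<in> fun_vs.span (eps_op a ` eps_vec ` Pow R)"
    unfolding module_hom.span_image[OF linear_vact[unfolded linear_iff_module_hom]]
    using assms(1) by (rule imageI)
  ultimately show ?thesis by (rule subsetD)
qed

lemma wedge_op_in_span:
  assumes "u \<in> fun_vs.span (eps_vec ` Pow R)" "k \<in> {1..g}"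
  shows "wedge_op k u \<in> fun_vs.span (eps_vec ` Pow R)"
proof -
  obtain c where c: "\<forall>s\<in>spin_space g. wedge_op k s = (\<lambda>K. \<Sum>a\<in>R. c a * eps_op a s K)"
    using wedge_op_eq_sum_eps_op[OF assms(2)] by blast
  have "u \<in> spin_space g" using span_eps_vec_subset_spin_space assms(1) by (rule subsetD)
  with c have "wedge_op k u = (\<lambda>K. \<Sum>a\<in>R. c a * eps_op a u K)" by (rule bspec)
  also have "\<dots> \<in> fun_vs.span (eps_vec ` Pow R)"
    by (rule span_lincomb[OF finite_atLeastAtMost]) (use eps_op_in_span[OF assms(1)] in blast)
  finally show ?thesis .
qed

lemma sbasis_in_span: "K \<subseteq> {1..g} \<Longrightarrow> sbasis K \<in> fun_vs.span (eps_vec ` Pow R)"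
proof (induction K rule: infinite_finite_induct)
  case empty
  show ?case by (rule fun_vs.span_base, rule image_eqI[of _ _ "{}"]) (simp_all add: one_S_def)
next
  case (insert k K)
  have "fun_scale (wsign K k) (wedge_op k (sbasis K)) = sbasis (insert k K)"
  proof
    fix L
    have "(k \<in> L \<and> L - {k} = K) = (L = insert k K)" using insert.hyps(2) by auto
    then show "fun_scale (wsign K k) (wedge_op k (sbasis K)) L = sbasis (insert k K) L"
      by (auto simp: wedge_op_def sbasis_def fun_scale_def wsign_mult_self mult.assoc[symmetric])
  qed
  moreover have "wedge_op k (sbasis K) \<in> fun_vs.span (eps_vec ` Pow R)"
    using insert by (intro wedge_op_in_span) auto
  ultimately show ?case using fun_vs.span_scale by metis
qed (auto dest: finite_subset)

lemma spin_space_subset_span: "spin_space g \<subseteq> fun_vs.span (eps_vec ` g_subsets)"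
proof
  fix s :: "nat set \<Rightarrow> 'a" assume s: "s \<in> spin_space g"
  have "(\<lambda>K. \<Sum>J\<in>Pow {1..g}. s J * sbasis J K) \<in> fun_vs.span (eps_vec ` Pow R)"
    by (rule span_lincomb[OF finite_Pow_iff[THEN iffD2, OF finite_atLeastAtMost]])
      (use sbasis_in_span in blast)
  then have "s \<in> fun_vs.span (eps_vec ` Pow R)"
    using spin_space_expansion[OF s] by simp
  moreover have "eps_vec ` Pow R \<subseteq> fun_vs.span (eps_vec ` g_subsets)"
    using eps_vec_in_span by blast
  then have "fun_vs.span (eps_vec ` Pow R) \<subseteq> fun_vs.span (eps_vec ` g_subsets)"
    by (rule fun_vs.span_minimal[OF _ fun_vs.subspace_span])
  ultimately show "s \<in> fun_vs.span (eps_vec ` g_subsets)" by blast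
qed

lemma deltaI_nonzero: "J \<subseteq> R \<Longrightarrow> deltaI \<omega> J \<noteq> 0"
proof -
  assume J: "J \<subseteq> R"
  have "finite {(a, b). a \<in> J \<and> b \<in> J \<and> a < b}"
    by (rule finite_subset[of _ "J \<times> J"]) (use J finite_subset in auto)
  moreover have "\<omega> b \<noteq> \<omega> a" if "a \<in> J" "b \<in> J" "a < b" for a b
  proof -
    have "a \<in> R" "b \<in> R" using that J by auto
    then show ?thesis using inj_onD[OF inj_roots] \<open>a < b\<close> by fastforce
  qed
  ultimately show ?thesis unfolding deltaI_def by auto
qed

lemma MI_one_eq: "MI g f \<omega> J one_S = fun_scale (inverse (deltaI \<omega> J)) (eps_vec J)"
  by (simp add: MI_def fun_scale_def eps_prod_def)

lemma MI_one_in_spin_space: "(\<lambda>J. MI g f \<omega> J one_S) ` g_subsets \<subseteq> spin_space g"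
  unfolding MI_one_eq
  by (intro image_subsetI fun_vs.subspace_scale[OF subspace_spin_space]
      eps_prod_in_spin_space[OF one_S_in_spin_space])

lemma spin_space_subset_span_MI_one: "spin_space g \<subseteq> fun_vs.span ((\<lambda>J. MI g f \<omega> J one_S) ` g_subsets)"
proof -
  have "eps_vec J \<in> fun_vs.span ((\<lambda>J. MI g f \<omega> J one_S) ` g_subsets)" if J: "J \<in> g_subsets" for J
  proof -
    have "deltaI \<omega> J \<noteq> 0" using deltaI_nonzero J by blast
    then have "eps_vec J = fun_scale (deltaI \<omega> J) (MI g f \<omega> J one_S)"
      by (simp add: MI_one_eq fun_scale_def mult.assoc[symmetric])
    then show ?thesis using J by (auto intro: fun_vs.span_scale fun_vs.span_base)
  qed
  then have "fun_vs.span (eps_vec ` g_subsets) \<subseteq> fun_vs.span ((\<lambda>J. MI g f \<omega> J one_S) ` g_subsets)"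
    by (intro fun_vs.span_minimal[OF _ fun_vs.subspace_span]) blast
  then show ?thesis using spin_space_subset_span by blast
qed

lemma MI_one_basis:
  "\<exists>I :: nat \<Rightarrow> nat set.
     (\<forall>j\<in>{1..2^g}. I j \<subseteq> {1..2*g+1} \<and> card (I j) = g) \<and>
     (\<forall>s\<in>spin_space g. \<exists>!c :: nat \<Rightarrow> 'a.
         (\<forall>j. j \<notin> {1..2^g} \<longrightarrow> c j = 0) \<and>
         s = (\<lambda>K. \<Sum>j\<in>{1..2^g}. c j * MI g f \<omega> (I j) one_S K))"
proof -
  let ?N = "{1..2^g::nat}"
  have "finite ((\<lambda>J. MI g f \<omega> J one_S) ` g_subsets)"
    by (rule finite_imageI, rule finite_subset[of _ "Pow R"]) auto
  from fun_vs.enumerated_basis_in_spanning_set[OF MI_one_in_spin_space spin_space_subset_span_MI_one this]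
  obtain e where e: "e ` ?N \<subseteq> (\<lambda>J. MI g f \<omega> J one_S) ` g_subsets"
    and coords: "\<And>s. s \<in> spin_space g \<Longrightarrow>
      \<exists>!c. (\<forall>j. j \<notin> ?N \<longrightarrow> c j = 0) \<and> s = (\<Sum>j\<in>?N. fun_scale (c j) (e j))"
    unfolding dim_spin_space by blast
  have "\<forall>j\<in>?N. \<exists>J. J \<in> g_subsets \<and> MI g f \<omega> J one_S = e j"
  proof
    fix j assume "j \<in> ?N"
    then have "e j \<in> (\<lambda>J. MI g f \<omega> J one_S) ` g_subsets" by (rule subsetD[OF e imageI])
    then obtain J where "J \<in> g_subsets" "e j = MI g f \<omega> J one_S" by (rule imageE)
    then show "\<exists>J. J \<in> g_subsets \<and> MI g f \<omega> J one_S = e j" by (intro exI[of _ J]) simp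
  qed
  from bchoice[OF this] obtain I where I: "\<forall>j\<in>?N. I j \<in> g_subsets \<and> MI g f \<omega> (I j) one_S = e j" ..
  have sum_eq: "(\<lambda>K. \<Sum>j\<in>?N. c j * MI g f \<omega> (I j) one_S K) = (\<Sum>j\<in>?N. fun_scale (c j) (e j))" for c
    unfolding sum_fun_scale using I by (intro ext sum.cong) auto
  show ?thesis
  proof (intro exI[of _ I] conjI ballI)
    show "I j \<subseteq> {1..2*g+1}" "card (I j) = g" if "j \<in> ?N" for j using I that by blast+
    show "\<exists>!c. (\<forall>j. j \<notin> ?N \<longrightarrow> c j = 0) \<and> s = (\<lambda>K. \<Sum>j\<in>?N. c j * MI g f \<omega> (I j) one_S K)"
      if "s \<in> spin_space g" for s
      unfolding sum_eq using that by (rule coords)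
  qed
qed

end

theorem proposition4p7:
  fixes g :: nat and f :: "'a::field poly" and \<omega> :: "nat \<Rightarrow> 'a"
  assumes char: "(2::'a) \<noteq> 0"
    and sepcl: "separably_closed TYPE('a)"
    and g1: "g \<ge> 1"
    and roots: "f = (\<Prod>i\<in>{1..2*g+1}. [:- \<omega> i, 1:])"
    and distinct: "inj_on \<omega> {1..2*g+1}"
  shows "\<exists>I :: nat \<Rightarrow> nat set.
     (\<forall>j\<in>{1..2^g}. I j \<subseteq> {1..2*g+1} \<and> card (I j) = g) \<and>
     (\<forall>s\<in>spin_space g. \<exists>!c :: nat \<Rightarrow> 'a.
         (\<forall>j. j \<notin> {1..2^g} \<longrightarrow> c j = 0) \<and>
         s = (\<lambda>K. \<Sum>j\<in>{1..2^g}. c j * MI g f \<omega> (I j) one_S K))"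
proof -
  interpret split_hyperelliptic g f \<omega> using char roots distinct by unfold_locales
  show ?thesis by (rule MI_one_basis)
qed

end
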